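(* Let $p\in(0,1)$ and consider the house-of-cards Markov chain on state space $\mathbb{N}\cup\{0\}$ with transition probabilities $p_{i0}=p$ and $p_{i(i+1)}=1-p$ for all $i\in\mathbb{N}\cup\{0\}$ (and $p_{ik}=0$ otherwise). Then there do not exist positive reals $\{\alpha_k\}_{k\ge0},\{\beta_i\}_{i\ge0}$ and constants $M_1,M_2>0$ such that $$\sum_{k=0}^\infty p_{ik}\alpha_k\le M_1\beta_i\ \ \text{for all } i\ge0\qquad\text{and}\qquad \sum_{i=0}^\infty p_{ik}\beta_i\le M_2\alpha_k\ \ \text{for all }k\ge0.$$ *)

theory Defs
  imports "HOL-Analysis.Analysis"
begin

definition hoc :: "real \<Rightarrow> nat \<Rightarrow> nat \<Rightarrow> real" where
  "hoc p i k = (if k = 0 then p else if k = Suc i then 1 - p else 0)"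

end

theory Submission
  imports Defs
begin

text \<open>Every row of the chain jumps to state 0 with probability p, so the row inequalities force
  \<open>\<beta> i \<ge> p \<alpha>\<^sub>0 / M\<^sub>1\<close> for all i. But column 0 of the chain is constant p, so the column
  inequality at k = 0 requires \<open>\<Sum>\<^sub>i p \<beta> i\<close> to converge, which is impossible for a sequence
  bounded below by a positive constant.\<close>

lemma hoc_nonneg: "0 \<le> p \<Longrightarrow> p \<le> 1 \<Longrightarrow> 0 \<le> hoc p i k"
  by (simp add: hoc_def)

lemma hoc_to_zero [simp]: "hoc p i 0 = p"
  by (simp add: hoc_def)

lemma hoc_row_ge_jump_to_zero:
  assumes "0 \<le> p" "p \<le> 1" "\<And>k. 0 \<le> \<alpha> k" "summable (\<lambda>k. hoc p i k * \<alpha> k)"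
  shows "p * \<alpha> 0 \<le> (\<Sum>k. hoc p i k * \<alpha> k)"
proof -
  have "(\<Sum>k\<in>{0}. hoc p i k * \<alpha> k) \<le> (\<Sum>k. hoc p i k * \<alpha> k)"
    using assms by (intro sum_le_suminf) (auto intro: hoc_nonneg mult_nonneg_nonneg)
  then show ?thesis by simp
qed

lemma not_summable_bounded_below:
  fixes f :: "nat \<Rightarrow> real"
  assumes "0 < c" "\<And>n. c \<le> f n"
  shows "\<not> summable f"
proof
  assume "summable f"
  then have "f \<longlonglongrightarrow> 0" by (rule summable_LIMSEQ_zero)
  then have "c \<le> 0" using assms(2) by (intro tendsto_lowerbound) auto
  with assms(1) show False by simp
qed

theorem mainTheorem6:
  fixes p :: real
  assumes "0 < p" and "p < 1"
  shows "\<not> (\<exists>(\<alpha>::nat \<Rightarrow> real) (\<beta>::nat \<Rightarrow> real) (M1::real) (M2::real).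
            (\<forall>k. \<alpha> k > 0) \<and> (\<forall>i. \<beta> i > 0) \<and> M1 > 0 \<and> M2 > 0 \<and>
            (\<forall>i. summable (\<lambda>k. hoc p i k * \<alpha> k) \<and>
                 (\<Sum>k. hoc p i k * \<alpha> k) \<le> M1 * \<beta> i) \<and>
            (\<forall>k. summable (\<lambda>i. hoc p i k * \<beta> i) \<and>
                 (\<Sum>i. hoc p i k * \<beta> i) \<le> M2 * \<alpha> k))"
proof
  assume "\<exists>\<alpha> \<beta> M1 M2. (\<forall>k. \<alpha> k > 0) \<and> (\<forall>i. \<beta> i > 0) \<and> M1 > 0 \<and> M2 > 0 \<and>
            (\<forall>i. summable (\<lambda>k. hoc p i k * \<alpha> k) \<and>
                 (\<Sum>k. hoc p i k * \<alpha> k) \<le> M1 * \<beta> i) \<and>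
            (\<forall>k. summable (\<lambda>i. hoc p i k * \<beta> i) \<and>
                 (\<Sum>i. hoc p i k * \<beta> i) \<le> M2 * \<alpha> k)"
  then obtain \<alpha> \<beta> M1 where \<alpha>_pos: "\<And>k. \<alpha> k > 0" and "M1 > 0"
    and rows: "\<And>i. summable (\<lambda>k. hoc p i k * \<alpha> k) \<and> (\<Sum>k. hoc p i k * \<alpha> k) \<le> M1 * \<beta> i"
    and column_zero: "summable (\<lambda>i. hoc p i 0 * \<beta> i)"
    by blast
  have "p * \<alpha> 0 \<le> M1 * \<beta> i" for i
    using hoc_row_ge_jump_to_zero[of p \<alpha> i] rows[of i] \<alpha>_pos assms
    by (meson less_imp_le order_trans)
  then have "p * (p * \<alpha> 0 / M1) \<le> p * \<beta> i" for i
    using \<open>M1 > 0\<close> assms by (simp add: field_simps)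
  moreover have "0 < p * (p * \<alpha> 0 / M1)"
    using \<alpha>_pos \<open>M1 > 0\<close> assms by simp
  ultimately have "\<not> summable (\<lambda>i. p * \<beta> i)"
    by (rule not_summable_bounded_below[rotated])
  with column_zero show False by simp
qed

end
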